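(* Let $G$ be a finite group and $M$ a $\mathbb{B}[G]$-module generated by $n$ elements. Let $P\subseteq M$ be the poset of join-irreducible elements of $M$. Then $P$ does not contain a chain of length greater than $n$ (i.e. no totally ordered subset of $P$ has more than $n$ elements).
   Context: $\mathbb{B}=\{0,1\}$ is the Boolean semifield with $1+1=1$; $\mathbb{B}[G]$ is the group semiring. A $\mathbb{B}$-module is partially ordered by $x\le y$ iff $x+y=y$. An element $v$ is join-irreducible if $v\neq0$ and $v=a+b$ implies $v=a$ or $v=b$. *)

theory Defs
  imports "HOL-Algebra.Coset"
begin

text \<open>Elements of the group semiring B[G] of a finite group G are identified with
 subsets of carrier G (functions G -> B): sum = union, zero = empty set,
 product = set product S <#> T, one = {1}.\<close>

definition BG_module ::
  "('g, 'b) monoid_scheme \<Rightarrow> 'm set \<Rightarrow> ('m \<Rightarrow> 'm \<Rightarrow> 'm) \<Rightarrow> 'm \<Rightarrow> ('g set \<Rightarrow> 'm \<Rightarrow> 'm) \<Rightarrow> bool"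
  where
  "BG_module G M add zero smul \<longleftrightarrow>
     zero \<in> M \<and>
     (\<forall>x\<in>M. \<forall>y\<in>M. add x y \<in> M) \<and>
     (\<forall>x\<in>M. \<forall>y\<in>M. \<forall>z\<in>M. add (add x y) z = add x (add y z)) \<and>
     (\<forall>x\<in>M. \<forall>y\<in>M. add x y = add y x) \<and>
     (\<forall>x\<in>M. add zero x = x) \<and>
     (\<forall>S. \<forall>x\<in>M. S \<subseteq> carrier G \<longrightarrow> smul S x \<in> M) \<and>
     (\<forall>S T. \<forall>x\<in>M. S \<subseteq> carrier G \<longrightarrow> T \<subseteq> carrier G \<longrightarrow>
        smul (S \<union> T) x = add (smul S x) (smul T x)) \<and>
     (\<forall>S. \<forall>x\<in>M. \<forall>y\<in>M. S \<subseteq> carrier G \<longrightarrow>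
        smul S (add x y) = add (smul S x) (smul S y)) \<and>
     (\<forall>S T. \<forall>x\<in>M. S \<subseteq> carrier G \<longrightarrow> T \<subseteq> carrier G \<longrightarrow>
        smul (S <#>\<^bsub>G\<^esub> T) x = smul S (smul T x)) \<and>
     (\<forall>x\<in>M. smul {} x = zero) \<and>
     (\<forall>S. S \<subseteq> carrier G \<longrightarrow> smul S zero = zero) \<and>
     (\<forall>x\<in>M. smul {\<one>\<^bsub>G\<^esub>} x = x)"

definition generated_by ::
  "('g, 'b) monoid_scheme \<Rightarrow> 'm set \<Rightarrow> ('m \<Rightarrow> 'm \<Rightarrow> 'm) \<Rightarrow> 'm \<Rightarrow> ('g set \<Rightarrow> 'm \<Rightarrow> 'm) \<Rightarrow> 'm list \<Rightarrow> bool"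
  where
  "generated_by G M add zero smul xs \<longleftrightarrow>
     set xs \<subseteq> M \<and>
     (\<forall>m\<in>M. \<exists>Ss. length Ss = length xs \<and> (\<forall>S\<in>set Ss. S \<subseteq> carrier G) \<and>
        m = foldr add (map2 smul Ss xs) zero)"

definition mle :: "('m \<Rightarrow> 'm \<Rightarrow> 'm) \<Rightarrow> 'm \<Rightarrow> 'm \<Rightarrow> bool"
  where "mle add x y \<longleftrightarrow> add x y = y"

definition join_irreducible :: "'m set \<Rightarrow> ('m \<Rightarrow> 'm \<Rightarrow> 'm) \<Rightarrow> 'm \<Rightarrow> 'm \<Rightarrow> bool"
  where "join_irreducible M add zero v \<longleftrightarrow>
     v \<in> M \<and> v \<noteq> zero \<and> (\<forall>a\<in>M. \<forall>b\<in>M. v = add a b \<longrightarrow> v = a \<or> v = b)"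

end

theory Submission
  imports Defs "HOL-Algebra.Multiplicative_Group"
begin

text \<open>A join-irreducible element of a module generated by \<open>x\<^sub>1, \<dots>, x\<^sub>n\<close> is a
  finite sum of elements \<open>g x\<^sub>i\<close>, hence equal to one of them. If \<open>g x \<le> h x\<close>, then
  \<open>k = h\<inverse> g\<close> satisfies \<open>k x \<le> x\<close>, so \<open>k\<^sup>j x \<le> x\<close> for all \<open>j\<close>; taking \<open>j = |G| - 1\<close>
  gives \<open>x = k k\<^sup>j x \<le> k x\<close>, whence \<open>g x = h x\<close>. So two comparable join-irreducibles
  in the orbit of the same generator coincide, and a chain of join-irreducibles
  meets each of the \<open>n\<close> orbits at most once.\<close>

locale bg_module = group G for G :: "('g, 'b) monoid_scheme" (structure) +
  fixes M :: "'m set" and add :: "'m \<Rightarrow> 'm \<Rightarrow> 'm" and zero :: 'm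
    and smul :: "'g set \<Rightarrow> 'm \<Rightarrow> 'm"
  assumes zero_closed: "zero \<in> M"
    and add_closed: "x \<in> M \<Longrightarrow> y \<in> M \<Longrightarrow> add x y \<in> M"
    and add_assoc: "x \<in> M \<Longrightarrow> y \<in> M \<Longrightarrow> z \<in> M \<Longrightarrow> add (add x y) z = add x (add y z)"
    and add_commute: "x \<in> M \<Longrightarrow> y \<in> M \<Longrightarrow> add x y = add y x"
    and smul_closed: "S \<subseteq> carrier G \<Longrightarrow> x \<in> M \<Longrightarrow> smul S x \<in> M"
    and smul_union:
      "S \<subseteq> carrier G \<Longrightarrow> T \<subseteq> carrier G \<Longrightarrow> x \<in> M \<Longrightarrow> smul (S \<union> T) x = add (smul S x) (smul T x)"
    and smul_add:
      "S \<subseteq> carrier G \<Longrightarrow> x \<in> M \<Longrightarrow> y \<in> M \<Longrightarrow> smul S (add x y) = add (smul S x) (smul S y)"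
    and smul_set_mult:
      "S \<subseteq> carrier G \<Longrightarrow> T \<subseteq> carrier G \<Longrightarrow> x \<in> M \<Longrightarrow> smul (S <#> T) x = smul S (smul T x)"
    and smul_empty: "x \<in> M \<Longrightarrow> smul {} x = zero"
    and smul_one: "x \<in> M \<Longrightarrow> smul {\<one>} x = x"

lemma BG_module_imp_bg_module:
  fixes add :: "'m \<Rightarrow> 'm \<Rightarrow> 'm" and zero :: 'm
  assumes "group G" and "BG_module G M add zero smul"
  shows "bg_module G M add zero smul"
  using assms unfolding bg_module_def bg_module_axioms_def BG_module_def by auto

context bg_module
begin

lemma smul_singleton_closed: "g \<in> carrier G \<Longrightarrow> x \<in> M \<Longrightarrow> smul {g} x \<in> M"
  by (simp add: smul_closed)

lemma smul_singleton_smul_singleton: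
  "g \<in> carrier G \<Longrightarrow> h \<in> carrier G \<Longrightarrow> x \<in> M \<Longrightarrow> smul {g} (smul {h} x) = smul {g \<otimes> h} x"
  using smul_set_mult[of "{g}" "{h}" x] by (simp add: set_mult_def)

lemma add_idem: "x \<in> M \<Longrightarrow> add x x = x"
  using smul_union[of "{\<one>}" "{\<one>}" x] by (simp add: smul_one)

lemma mle_refl: "x \<in> M \<Longrightarrow> mle add x x"
  by (simp add: mle_def add_idem)

lemma mle_trans: "x \<in> M \<Longrightarrow> y \<in> M \<Longrightarrow> z \<in> M \<Longrightarrow> mle add x y \<Longrightarrow> mle add y z \<Longrightarrow> mle add x z"
  unfolding mle_def by (metis add_assoc)

lemma mle_antisym: "x \<in> M \<Longrightarrow> y \<in> M \<Longrightarrow> mle add x y \<Longrightarrow> mle add y x \<Longrightarrow> x = y"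
  unfolding mle_def by (metis add_commute)

lemma smul_mle_mono:
  "S \<subseteq> carrier G \<Longrightarrow> x \<in> M \<Longrightarrow> y \<in> M \<Longrightarrow> mle add x y \<Longrightarrow> mle add (smul S x) (smul S y)"
  unfolding mle_def by (metis smul_add)

lemma smul_pow_mle:
  assumes k: "k \<in> carrier G" and x: "x \<in> M" and le: "mle add (smul {k} x) x"
  shows "mle add (smul {k [^] (j::nat)} x) x"
proof (induction j)
  case 0
  show ?case using x by (simp add: smul_one mle_refl)
next
  case (Suc j)
  have "smul {k [^] Suc j} x = smul {k [^] j} (smul {k} x)"
    using k x by (simp add: smul_singleton_smul_singleton)
  moreover have "mle add (smul {k [^] j} (smul {k} x)) (smul {k [^] j} x)"
    using smul_mle_mono[of "{k [^] j}", OF _ smul_singleton_closed[OF k x] x le] k by simp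
  ultimately show ?case
    using Suc k x by (metis mle_trans smul_singleton_closed nat_pow_closed)
qed

lemma join_irreducible_foldr_add:
  assumes "set ys \<subseteq> M" and "join_irreducible M add zero v" and "v = foldr add ys zero"
  shows "v \<in> set ys"
  using assms
proof (induction ys)
  case Nil
  then show ?case by (simp add: join_irreducible_def)
next
  case (Cons y ys)
  have "foldr add ys zero \<in> M"
    using Cons.prems(1) by (induction ys) (auto simp: zero_closed add_closed)
  then have "v = y \<or> v = foldr add ys zero"
    using Cons.prems unfolding join_irreducible_def by auto
  then show ?case using Cons by auto
qed

lemma join_irreducible_smul:
  assumes "finite S" and "S \<subseteq> carrier G" and "x \<in> M"
    and "join_irreducible M add zero v" and "v = smul S x"
  shows "\<exists>g\<in>S. v = smul {g} x"
  using assms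
proof (induction S rule: finite_induct)
  case empty
  then show ?case by (simp add: smul_empty join_irreducible_def)
next
  case (insert g S)
  have "v = add (smul {g} x) (smul S x)"
    using insert.prems smul_union[of "{g}" S x] by simp
  then have "v = smul {g} x \<or> v = smul S x"
    using insert.prems smul_closed unfolding join_irreducible_def by (metis insert_subset empty_subsetI)
  then show ?case using insert by auto
qed

end

locale finite_bg_module = bg_module +
  assumes finite_carrier: "finite (carrier G)"
begin

lemma smul_mle_imp_eq:
  assumes k: "k \<in> carrier G" and x: "x \<in> M" and le: "mle add (smul {k} x) x"
  shows "smul {k} x = x"
proof -
  obtain j where j: "order G = Suc j"
    using finite_carrier order_gt_0_iff_finite by (metis gr0_conv_Suc)
  have "k \<otimes> k [^] j = \<one>"
    using pow_order_eq_1[OF k] nat_pow_Suc2[OF k, of j] j by simp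
  then have x_eq: "x = smul {k} (smul {k [^] j} x)"
    using k x by (simp add: smul_singleton_smul_singleton smul_one)
  have "mle add (smul {k} (smul {k [^] j} x)) (smul {k} x)"
    using smul_mle_mono[of "{k}", OF _ smul_singleton_closed x smul_pow_mle[OF k x le, of j]] k x
    by simp
  then have "mle add x (smul {k} x)"
    by (metis x_eq)
  then show ?thesis
    using mle_antisym le x k by (simp add: smul_singleton_closed)
qed

lemma smul_singleton_mle_imp_eq:
  assumes g: "g \<in> carrier G" and h: "h \<in> carrier G" and x: "x \<in> M"
    and le: "mle add (smul {g} x) (smul {h} x)"
  shows "smul {g} x = smul {h} x"
proof -
  define k where "k = inv h \<otimes> g"
  have k: "k \<in> carrier G" and hk: "h \<otimes> k = g"
    using g h by (simp_all add: k_def m_assoc[symmetric])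
  have "mle add (smul {inv h} (smul {g} x)) (smul {inv h} (smul {h} x))"
    using smul_mle_mono[of "{inv h}", OF _ smul_singleton_closed smul_singleton_closed le] g h x
    by simp
  then have "mle add (smul {k} x) x"
    using g h x by (simp add: k_def smul_singleton_smul_singleton smul_one)
  then have "smul {k} x = x"
    using smul_mle_imp_eq k x by blast
  then show ?thesis
    using smul_singleton_smul_singleton[OF h k x] hk by simp
qed

lemma join_irreducible_in_generator_orbit:
  assumes "generated_by G M add zero smul xs" and "join_irreducible M add zero v"
  shows "\<exists>i<length xs. \<exists>g\<in>carrier G. v = smul {g} (xs ! i)"
proof -
  obtain Ss where len: "length Ss = length xs" and Ss: "\<forall>S\<in>set Ss. S \<subseteq> carrier G"
    and v: "v = foldr add (map2 smul Ss xs) zero"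
    using assms unfolding generated_by_def join_irreducible_def by blast
  have terms: "set (map2 smul Ss xs) = {smul (Ss ! i) (xs ! i) | i. i < length xs}"
    using len by (auto simp: set_zip)
  have "set (map2 smul Ss xs) \<subseteq> M"
    using assms(1) Ss len unfolding terms generated_by_def
    by (auto intro!: smul_closed simp: nth_mem)
  then obtain i where i: "i < length xs" and vi: "v = smul (Ss ! i) (xs ! i)"
    using join_irreducible_foldr_add[OF _ assms(2) v] unfolding terms by blast
  have "Ss ! i \<subseteq> carrier G" and "xs ! i \<in> M"
    using Ss assms(1) i len unfolding generated_by_def by (auto simp: nth_mem)
  then show ?thesis
    using join_irreducible_smul[OF finite_subset[OF _ finite_carrier] _ _ assms(2) vi] i
    by blast
qed

lemma chain_of_join_irreducibles_card_le:
  assumes gen: "generated_by G M add zero smul xs"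
    and irr: "C \<subseteq> {v \<in> M. join_irreducible M add zero v}"
    and chain: "\<forall>x\<in>C. \<forall>y\<in>C. mle add x y \<or> mle add y x"
  shows "finite C \<and> card C \<le> length xs"
proof -
  define idx where "idx v = (SOME i. i < length xs \<and> (\<exists>g\<in>carrier G. v = smul {g} (xs ! i)))"
    for v
  have idx: "idx v < length xs \<and> (\<exists>g\<in>carrier G. v = smul {g} (xs ! idx v))" if "v \<in> C" for v
  proof -
    have "join_irreducible M add zero v"
      using irr that by blast
    then show ?thesis
      unfolding idx_def by (rule someI_ex[OF join_irreducible_in_generator_orbit[OF gen]])
  qed
  have inj: "inj_on idx C"
  proof (rule inj_onI)
    fix v w assume v: "v \<in> C" and w: "w \<in> C" and eq: "idx v = idx w"
    from idx[OF v] obtain g where g: "g \<in> carrier G" "v = smul {g} (xs ! idx v)"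
      by blast
    from idx[OF w] eq obtain h where h: "h \<in> carrier G" "w = smul {h} (xs ! idx v)"
      by auto
    have x: "xs ! idx v \<in> M"
      using idx[OF v] gen unfolding generated_by_def by (auto simp: nth_mem)
    have "mle add v w \<or> mle add w v"
      using chain v w by blast
    then show "v = w"
    proof
      assume "mle add v w"
      then show ?thesis
        using smul_singleton_mle_imp_eq[OF g(1) h(1) x] g(2) h(2) by simp
    next
      assume "mle add w v"
      then show ?thesis
        using smul_singleton_mle_imp_eq[OF h(1) g(1) x] g(2) h(2) by simp
    qed
  qed
  have into: "idx ` C \<subseteq> {..<length xs}"
    using idx by auto
  show ?thesis
    using finite_imageD[OF finite_subset[OF into finite_lessThan] inj] card_inj_on_le[OF inj into]
    by simp
qed

end

theorem proposition4p13:
  fixes G :: "('g, 'b) monoid_scheme" and M :: "'m set" and add :: "'m \<Rightarrow> 'm \<Rightarrow> 'm"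
    and zero :: 'm and smul :: "'g set \<Rightarrow> 'm \<Rightarrow> 'm" and n :: nat
  assumes "group G" and "finite (carrier G)"
    and "BG_module G M add zero smul"
    and "\<exists>xs. length xs = n \<and> generated_by G M add zero smul xs"
    and "C \<subseteq> {v \<in> M. join_irreducible M add zero v}"
    and "\<forall>x\<in>C. \<forall>y\<in>C. mle add x y \<or> mle add y x"
  shows "finite C \<and> card C \<le> n"
proof -
  interpret finite_bg_module G M add zero smul
    using BG_module_imp_bg_module[OF assms(1,3)] assms(2)
    by (intro finite_bg_module.intro finite_bg_module_axioms.intro)
  obtain xs where "length xs = n" and "generated_by G M add zero smul xs"
    using assms(4) by blast
  then show ?thesis
    using chain_of_join_irreducibles_card_le assms(5,6) by blast
qed

end
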